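(* Let $\mathcal{A}\in\mathbb{C}^{I_{1\ldots N}\times I_{1\ldots N}}$, and let $\mathcal{M},\mathcal{N}\in\mathbb{C}^{I_{1\ldots N}\times I_{1\ldots N}}$ be Hermitian positive definite tensors. Then (i) $0\in\sigma(\mathcal{A})$ if and only if $0\in\sigma(\mathcal{A}^{\dagger}_{\mathcal{M},\mathcal{N}})$; (ii) $0\in W(\mathcal{A})$ if and only if $0\in W(\mathcal{A}^{\dagger}_{\mathcal{M},\mathcal{N}})$.
   Context: Write $I_{1\ldots N}$ for $I_1\times\cdots\times I_N$. Einstein product: $(\mathcal{A}*_N\mathcal{B})_{i_1\ldots i_Nj_1\ldots j_L}=\sum_{k_1,\ldots,k_N}a_{i_1\ldots i_Nk_1\ldots k_N}b_{k_1\ldots k_Nj_1\ldots j_L}$ (also when $\mathcal{B}\in\mathbb{C}^{I_{1\ldots N}}$). $\mathcal{A}^H$ is the conjugate transpose. For $\mathcal{X},\mathcal{Y}\in\mathbb{C}^{I_{1\ldots N}}$, $\langle\mathcal{X},\mathcal{Y}\rangle=\mathcal{Y}^H*_N\mathcal{X}$, $\|\mathcal{X}\|=\langle\mathcal{X},\mathcal{X}\rangle^{1/2}$. $\mathcal{M}$ is Hermitian positive definite if $\mathcal{M}^H=\mathcal{M}$ and $\langle\mathcal{M}*_N\mathcal{X},\mathcal{X}\rangle>0$ for nonzero $\mathcal{X}$. $\sigma(\mathcal{A})$ is the set of $\lambda\in\mathbb{C}$ with $\mathcal{A}*_N\mathcal{X}=\lambda\mathcal{X}$ for some nonzero $\mathcal{X}\in\mathbb{C}^{I_{1\ldots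 N}}$. Numerical range: $W(\mathcal{A})=\{\langle\mathcal{A}*_N\mathcal{X},\mathcal{X}\rangle:\mathcal{X}\in\mathbb{C}^{I_{1\ldots N}},\ \|\mathcal{X}\|=1\}$. Weighted Moore-Penrose inverse $\mathcal{A}^{\dagger}_{\mathcal{M},\mathcal{N}}$: the unique $\mathcal{X}$ with $\mathcal{A}*_N\mathcal{X}*_N\mathcal{A}=\mathcal{A}$, $\mathcal{X}*_N\mathcal{A}*_N\mathcal{X}=\mathcal{X}$, $(\mathcal{M}*_N\mathcal{A}*_N\mathcal{X})^H=\mathcal{M}*_N\mathcal{A}*_N\mathcal{X}$, $(\mathcal{N}*_N\mathcal{X}*_N\mathcal{A})^H=\mathcal{N}*_N\mathcal{X}*_N\mathcal{A}$. *)

theory Defs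
  imports Complex_Main "HOL-Library.Complex_Order"
begin

definition idx :: "nat list \<Rightarrow> nat list set" where
  "idx dims = {is. length is = length dims \<and> (\<forall>k<length dims. is ! k < dims ! k)}"

type_synonym tensor = "nat list \<Rightarrow> nat list \<Rightarrow> complex"
type_synonym tvec = "nat list \<Rightarrow> complex"

text \<open>A tensor in C^{I_1..N x I_1..N}: entries indexed by two multi-indices, zero outside the index set.\<close>
definition is_tensor :: "nat list \<Rightarrow> tensor \<Rightarrow> bool" where
  "is_tensor dims A \<longleftrightarrow> (\<forall>i j. i \<notin> idx dims \<or> j \<notin> idx dims \<longrightarrow> A i j = 0)"

definition is_tvec :: "nat list \<Rightarrow> tvec \<Rightarrow> bool" where
  "is_tvec dims X \<longleftrightarrow> (\<forall>i. i \<notin> idx dims \<longrightarrow> X i = 0)"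

definition ein :: "nat list \<Rightarrow> tensor \<Rightarrow> tensor \<Rightarrow> tensor" where
  "ein dims A B = (\<lambda>i j. \<Sum>k\<in>idx dims. A i k * B k j)"

definition einv :: "nat list \<Rightarrow> tensor \<Rightarrow> tvec \<Rightarrow> tvec" where
  "einv dims A X = (\<lambda>i. \<Sum>k\<in>idx dims. A i k * X k)"

definition ctrans :: "tensor \<Rightarrow> tensor" where
  "ctrans A = (\<lambda>i j. cnj (A j i))"

definition tinner :: "nat list \<Rightarrow> tvec \<Rightarrow> tvec \<Rightarrow> complex" where
  "tinner dims X Y = (\<Sum>i\<in>idx dims. cnj (Y i) * X i)"

definition tnorm :: "nat list \<Rightarrow> tvec \<Rightarrow> real" where
  "tnorm dims X = sqrt (Re (tinner dims X X))"

definition hpd :: "nat list \<Rightarrow> tensor \<Rightarrow> bool" where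
  "hpd dims M \<longleftrightarrow> is_tensor dims M \<and> ctrans M = M \<and>
     (\<forall>X. is_tvec dims X \<and> X \<noteq> (\<lambda>_. 0) \<longrightarrow> tinner dims (einv dims M X) X > 0)"

definition tspectrum :: "nat list \<Rightarrow> tensor \<Rightarrow> complex set" where
  "tspectrum dims A = {c. \<exists>X. is_tvec dims X \<and> X \<noteq> (\<lambda>_. 0) \<and> einv dims A X = (\<lambda>i. c * X i)}"

definition numrange :: "nat list \<Rightarrow> tensor \<Rightarrow> complex set" where
  "numrange dims A = {tinner dims (einv dims A X) X | X. is_tvec dims X \<and> tnorm dims X = 1}"

definition wmp :: "nat list \<Rightarrow> tensor \<Rightarrow> tensor \<Rightarrow> tensor \<Rightarrow> tensor" where
  "wmp dims A M N = (THE X. is_tensor dims X \<and>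
      ein dims (ein dims A X) A = A \<and>
      ein dims (ein dims X A) X = X \<and>
      ctrans (ein dims M (ein dims A X)) = ein dims M (ein dims A X) \<and>
      ctrans (ein dims N (ein dims X A)) = ein dims N (ein dims X A))"

end

(* A tensor has 0 in its spectrum exactly when it is singular.  The four defining equations
   are symmetric in A and X = wmp A M N (with M and N swapped), and if A is nonsingular then
   AXA = A forces X = A^-1; hence A and X are singular together, which is (i).  For (ii), a
   singular tensor has 0 in its numerical range (normalise a kernel vector), and if A is
   invertible, y = A x turns <A x, x> = 0 into <A^-1 y, y> = cnj <A x, x> = 0.

   Since wmp is a definite description, existence and uniqueness must be proved.  Uniqueness
   follows from the definiteness of M and N.  For existence, T = N^-1 A^H M A is self-adjoint for
   the N-weighted inner product, so ker T^2 = ker T, and X = T^# N^-1 A^H M where T^# is the group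
   inverse of T.  Group inverses, and inverses of nonsingular tensors, exist because the
   powers of T are linearly dependent in the finite-dimensional tensor space. *)

theory Submission
  imports Defs "HOL-Library.Function_Algebras"
begin

section \<open>The algebra of square tensors\<close>

lemma finite_idx: "finite (idx dims)"
proof -
  have "idx dims \<subseteq> {xs. set xs \<subseteq> {..<Max (set dims)} \<and> length xs = length dims}"
  proof (intro subsetI CollectI conjI)
    fix xs x assume xs: "xs \<in> idx dims" and "x \<in> set xs"
    then obtain k where k: "k < length dims" "xs ! k = x"
      by (auto simp: in_set_conv_nth idx_def)
    then have "x < dims ! k" using xs by (auto simp: idx_def)
    also have "dims ! k \<le> Max (set dims)" using k by simp
    finally show "x \<in> {..<Max (set dims)}" by simp
  next
    fix xs assume "xs \<in> idx dims"
    then show "length xs = length dims" by (simp add: idx_def)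
  qed
  then show ?thesis by (rule finite_subset) (rule finite_lists_length_eq, simp)
qed

lemma sum_fun_apply: "(sum f A) x = (\<Sum>a\<in>A. f a x)"
  by (induction A rule: infinite_finite_induct) auto

definition tid :: "nat list \<Rightarrow> tensor" where
  "tid d = (\<lambda>i j. if i \<in> idx d \<and> j = i then 1 else 0)"

definition tscale :: "complex \<Rightarrow> tensor \<Rightarrow> tensor" where
  "tscale c A = (\<lambda>i j. c * A i j)"

lemma is_tensor_tid [simp]: "is_tensor d (tid d)"
  by (auto simp: is_tensor_def tid_def)

lemma is_tensor_ein: "is_tensor d A \<Longrightarrow> is_tensor d B \<Longrightarrow> is_tensor d (ein d A B)"
  by (auto simp: is_tensor_def ein_def)

lemma is_tensor_ctrans: "is_tensor d A \<Longrightarrow> is_tensor d (ctrans A)"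
  by (auto simp: is_tensor_def ctrans_def)

lemma is_tensor_tscale: "is_tensor d A \<Longrightarrow> is_tensor d (tscale c A)"
  by (auto simp: is_tensor_def tscale_def)

lemma is_tensor_add: "is_tensor d A \<Longrightarrow> is_tensor d B \<Longrightarrow> is_tensor d (A + B)"
  by (auto simp: is_tensor_def)

lemma is_tensor_diff: "is_tensor d A \<Longrightarrow> is_tensor d B \<Longrightarrow> is_tensor d (A - B)"
  by (auto simp: is_tensor_def)

lemma is_tensor_sum: "(\<And>l. l \<in> L \<Longrightarrow> is_tensor d (f l)) \<Longrightarrow> is_tensor d (sum f L)"
  by (auto simp: is_tensor_def sum_fun_apply)

lemma ein_assoc: "ein d (ein d A B) C = ein d A (ein d B C)"
  unfolding ein_def
  by (auto simp: fun_eq_iff sum_distrib_left sum_distrib_right mult.assoc intro: sum.swap)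

lemma sum_tid_left: "(\<Sum>k\<in>idx d. tid d i k * f k) = (if i \<in> idx d then f i else 0)"
proof -
  have "(\<Sum>k\<in>idx d. tid d i k * f k) = (\<Sum>k\<in>idx d. if k = i \<and> i \<in> idx d then f k else 0)"
    by (rule sum.cong) (auto simp: tid_def)
  then show ?thesis using finite_idx by (simp add: sum.delta')
qed

lemma sum_tid_right: "(\<Sum>k\<in>idx d. f k * tid d k j) = (if j \<in> idx d then f j else 0)"
proof -
  have "(\<Sum>k\<in>idx d. f k * tid d k j) = (\<Sum>k\<in>idx d. if k = j then f k else 0)"
    by (rule sum.cong) (auto simp: tid_def)
  then show ?thesis using finite_idx by (simp add: sum.delta')
qed

lemma ein_tid_left: "is_tensor d A \<Longrightarrow> ein d (tid d) A = A"
  by (auto simp: ein_def sum_tid_left is_tensor_def fun_eq_iff)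

lemma ein_tid_right: "is_tensor d A \<Longrightarrow> ein d A (tid d) = A"
  by (auto simp: ein_def sum_tid_right is_tensor_def fun_eq_iff)

lemma ctrans_ctrans [simp]: "ctrans (ctrans A) = A"
  by (simp add: ctrans_def)

lemma ctrans_ein: "ctrans (ein d A B) = ein d (ctrans B) (ctrans A)"
  by (auto simp: ctrans_def ein_def fun_eq_iff mult.commute)

lemma ein_add_right: "ein d A (B + C) = ein d A B + ein d A C"
  by (auto simp: ein_def fun_eq_iff algebra_simps sum.distrib)

lemma ein_diff_right: "ein d A (B - C) = ein d A B - ein d A C"
  by (auto simp: ein_def fun_eq_iff algebra_simps sum_subtractf)

lemma zero_tensor_eta [simp]: "(\<lambda>i j. 0) = (0 :: tensor)"
  by (simp add: zero_fun_def)

lemma ein_zero_left [simp]: "ein d 0 C = 0"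
  by (auto simp: ein_def fun_eq_iff)

lemma ein_zero_right [simp]: "ein d C 0 = 0"
  by (auto simp: ein_def fun_eq_iff)

lemma ein_tscale_left: "ein d (tscale c A) B = tscale c (ein d A B)"
  by (auto simp: ein_def tscale_def fun_eq_iff sum_distrib_left mult.assoc)

lemma ein_tscale_right: "ein d A (tscale c B) = tscale c (ein d A B)"
  by (auto simp: ein_def tscale_def fun_eq_iff sum_distrib_left algebra_simps)

lemma ein_sum_left: "ein d (sum f L) A = (\<Sum>l\<in>L. ein d (f l) A)"
  by (auto simp: ein_def sum_fun_apply sum_distrib_right fun_eq_iff intro: sum.swap)

lemma ein_sum_right: "ein d A (sum f L) = (\<Sum>l\<in>L. ein d A (f l))"
  by (auto simp: ein_def sum_fun_apply sum_distrib_left fun_eq_iff intro: sum.swap)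

interpretation tensor_space: vector_space tscale
  by unfold_locales (auto simp: tscale_def fun_eq_iff algebra_simps)

lemma einv_ein: "einv d (ein d A B) X = einv d A (einv d B X)"
  unfolding einv_def ein_def
  by (auto simp: fun_eq_iff sum_distrib_left sum_distrib_right mult.assoc intro: sum.swap)

lemma einv_tid: "is_tvec d X \<Longrightarrow> einv d (tid d) X = X"
  by (auto simp: einv_def sum_tid_left is_tvec_def fun_eq_iff)

lemma einv_zero [simp]: "einv d A (\<lambda>_. 0) = (\<lambda>_. 0)"
  by (simp add: einv_def)

lemma einv_scale: "einv d T (\<lambda>i. c * X i) = (\<lambda>i. c * einv d T X i)"
  by (simp add: einv_def sum_distrib_left mult.left_commute)

lemma is_tvec_einv: "is_tensor d A \<Longrightarrow> is_tvec d (einv d A X)"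
  by (auto simp: is_tensor_def is_tvec_def einv_def)

definition tker :: "nat list \<Rightarrow> tensor \<Rightarrow> tvec set" where
  "tker d T = {X. is_tvec d X \<and> einv d T X = (\<lambda>_. 0)}"

definition nonsingular :: "nat list \<Rightarrow> tensor \<Rightarrow> bool" where
  "nonsingular d T \<longleftrightarrow> tker d T \<subseteq> {\<lambda>_. 0}"

lemma zero_in_tspectrum_iff: "0 \<in> tspectrum d T \<longleftrightarrow> \<not> nonsingular d T"
  by (auto simp: tspectrum_def nonsingular_def tker_def)

lemma nonsingular_if_left_inverse:
  assumes "ein d P Q = tid d"
  shows "nonsingular d Q"
proof -
  have "X = (\<lambda>_. 0)" if "is_tvec d X" "einv d Q X = (\<lambda>_. 0)" for X
    using that by (metis assms einv_tid einv_ein einv_zero)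
  then show ?thesis by (auto simp: nonsingular_def tker_def)
qed

text \<open>A tensor equation is a family of vector equations, one for each column.\<close>
lemma ein_eq_0_if_tker_subset:
  assumes "tker d P \<subseteq> tker d Q" and "is_tensor d Y" and "ein d P Y = 0"
  shows "ein d Q Y = 0"
proof -
  have "(\<lambda>i. Y i j) \<in> tker d P" for j
    using assms(2,3) by (auto simp: tker_def is_tvec_def is_tensor_def einv_def ein_def fun_eq_iff)
  then have "(\<lambda>i. Y i j) \<in> tker d Q" for j
    using assms(1) by blast
  then show ?thesis
    by (auto simp: tker_def einv_def ein_def fun_eq_iff)
qed

lemma nonsingular_cancel_left:
  assumes "nonsingular d T" "ein d T Y = ein d T Z" "is_tensor d Y" "is_tensor d Z"
  shows "Y = Z"
proof -
  have "tker d T \<subseteq> tker d (tid d)"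
    using assms(1) by (auto simp: nonsingular_def tker_def)
  moreover have "ein d T (Y - Z) = 0"
    using assms(2) by (simp add: ein_diff_right)
  ultimately have "ein d (tid d) (Y - Z) = 0"
    using ein_eq_0_if_tker_subset is_tensor_diff assms(3,4) by blast
  then show ?thesis
    using assms(3,4) by (simp add: ein_tid_left is_tensor_diff)
qed

section \<open>Annihilating polynomials and generalized inverses\<close>

primrec tpow :: "nat list \<Rightarrow> tensor \<Rightarrow> nat \<Rightarrow> tensor" where
  "tpow d T 0 = tid d"
| "tpow d T (Suc l) = ein d T (tpow d T l)"

lemma is_tensor_tpow: "is_tensor d T \<Longrightarrow> is_tensor d (tpow d T l)"
  by (induction l) (simp_all add: is_tensor_ein)

lemma tpow_commute: "is_tensor d T \<Longrightarrow> ein d (tpow d T l) T = ein d T (tpow d T l)"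
  by (induction l) (simp_all add: ein_tid_left ein_tid_right ein_assoc)

definition tpoly :: "nat list \<Rightarrow> tensor \<Rightarrow> (nat \<Rightarrow> complex) \<Rightarrow> nat \<Rightarrow> tensor" where
  "tpoly d T c m = (\<Sum>l\<le>m. tscale (c l) (tpow d T l))"

lemma is_tensor_tpoly: "is_tensor d T \<Longrightarrow> is_tensor d (tpoly d T c m)"
  by (simp add: tpoly_def is_tensor_sum is_tensor_tscale is_tensor_tpow)

lemma tpoly_commute: "is_tensor d T \<Longrightarrow> ein d T (tpoly d T c m) = ein d (tpoly d T c m) T"
  by (simp add: tpoly_def ein_sum_left ein_sum_right ein_tscale_left ein_tscale_right tpow_commute)

lemma tpoly_Suc_shift:
  "tpoly d T c (Suc m) = tscale (c 0) (tid d) + ein d T (tpoly d T (\<lambda>l. c (Suc l)) m)"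
  unfolding tpoly_def sum.atMost_Suc_shift by (simp add: ein_sum_right ein_tscale_right)

lemma tscale_0 [simp]: "tscale 0 A = 0"
  by (simp add: tscale_def fun_eq_iff)

definition unit_tensor :: "nat list \<Rightarrow> nat list \<Rightarrow> tensor" where
  "unit_tensor a b = (\<lambda>i j. if i = a \<and> j = b then 1 else 0)"

lemma tensor_in_span_unit_tensors:
  assumes "is_tensor d T"
  shows "T \<in> tensor_space.span ((\<lambda>(a, b). unit_tensor a b) ` (idx d \<times> idx d))"
proof -
  have "T = (\<Sum>p\<in>idx d \<times> idx d. tscale (T (fst p) (snd p)) (unit_tensor (fst p) (snd p)))"
  proof (intro ext)
    fix i j
    have "(\<Sum>p\<in>idx d \<times> idx d. tscale (T (fst p) (snd p)) (unit_tensor (fst p) (snd p))) i j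
        = (\<Sum>p\<in>idx d \<times> idx d. if p = (i, j) then T i j else 0)"
      unfolding sum_fun_apply by (intro sum.cong) (auto simp: tscale_def unit_tensor_def)
    also have "\<dots> = T i j"
      using assms finite_idx by (auto simp: is_tensor_def)
    finally show "T i j = (\<Sum>p\<in>idx d \<times> idx d. tscale (T (fst p) (snd p)) (unit_tensor (fst p) (snd p))) i j"
      by simp
  qed
  then show ?thesis
    by (metis (no_types, lifting) tensor_space.span_base tensor_space.span_scale tensor_space.span_sum
        case_prod_beta image_eqI)
qed

lemma tpow_linearly_dependent:
  assumes T: "is_tensor d T"
  shows "\<exists>m c. (\<exists>l\<le>m. c l \<noteq> 0) \<and> tpoly d T c m = 0"
proof -
  define B where "B = (\<lambda>(a, b). unit_tensor a b) ` (idx d \<times> idx d)"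
  define m where "m = card B"
  show ?thesis
  proof (cases "inj_on (tpow d T) {..m}")
    case True
    define P where "P = tpow d T ` {..m}"
    have "\<not> tensor_space.independent P"
    proof
      assume "tensor_space.independent P"
      moreover have "P \<subseteq> tensor_space.span B"
        using tensor_in_span_unit_tensors is_tensor_tpow[OF T] by (auto simp: P_def B_def)
      ultimately have "card P \<le> m"
        using tensor_space.independent_span_bound finite_idx by (simp add: m_def B_def)
      moreover have "card P = Suc m" using True by (simp add: P_def card_image)
      ultimately show False by simp
    qed
    then obtain t u where t: "finite t" "t \<subseteq> P" "(\<Sum>v\<in>t. tscale (u v) v) = 0"
      and "\<exists>v\<in>t. u v \<noteq> 0"
      unfolding tensor_space.dependent_explicit by blast
    then obtain l where l: "l \<le> m" "tpow d T l \<in> t" "u (tpow d T l) \<noteq> 0"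
      by (auto simp: P_def)
    define L where "L = {l\<in>{..m}. tpow d T l \<in> t}"
    define c where "c l = (if l \<in> L then u (tpow d T l) else 0)" for l
    have inj: "inj_on (tpow d T) L"
      by (rule inj_on_subset[OF True]) (auto simp: L_def)
    have "tpoly d T c m = (\<Sum>l\<in>L. tscale (u (tpow d T l)) (tpow d T l))"
      unfolding tpoly_def by (rule sum.mono_neutral_cong_right) (auto simp: L_def c_def)
    also have "\<dots> = (\<Sum>v\<in>tpow d T ` L. tscale (u v) v)"
      by (simp add: sum.reindex[OF inj])
    also have "tpow d T ` L = t"
      using t(2) by (auto simp: L_def P_def)
    finally have "tpoly d T c m = 0" using t(3) by simp
    moreover have "c l \<noteq> 0" using l by (simp add: c_def L_def)
    ultimately show ?thesis using l(1) by blast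
  next
    case False
    then obtain i j where ij: "i \<le> m" "j \<le> m" "i \<noteq> j" "tpow d T i = tpow d T j"
      unfolding inj_on_def by auto
    define c where "c l = (if l = i then 1 else if l = j then -1 else (0::complex))" for l
    have "tpoly d T c m = (\<Sum>l\<in>{i, j}. tscale (c l) (tpow d T l))"
      unfolding tpoly_def by (rule sum.mono_neutral_right) (auto simp: ij c_def)
    also have "\<dots> = 0" using ij by (auto simp: c_def tscale_def fun_eq_iff)
    finally show ?thesis using ij(1) by (intro exI[of _ m] exI[of _ c]) (auto simp: c_def)
  qed
qed

text \<open>Splitting off the lowest nonvanishing coefficient: \<open>T\<^sup>j p(T) = 0\<close> becomes
  \<open>T\<^sup>k (a + T R) = 0\<close> with \<open>a \<noteq> 0\<close> and \<open>R\<close> a polynomial in \<open>T\<close>.\<close>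
lemma tpoly_vanishing_factor:
  assumes T: "is_tensor d T"
  shows "\<exists>l\<le>m. c l \<noteq> 0 \<Longrightarrow> ein d (tpow d T j) (tpoly d T c m) = 0 \<Longrightarrow>
    \<exists>k a R. a \<noteq> 0 \<and> is_tensor d R \<and> ein d T R = ein d R T \<and>
      ein d (tpow d T k) (tscale a (tid d) + ein d T R) = 0"
proof (induction m arbitrary: j c)
  case 0
  have "c 0 \<noteq> 0"
    using "0.prems"(1) by simp
  moreover have "tpoly d T c 0 = tscale (c 0) (tid d) + ein d T 0"
    by (simp add: tpoly_def)
  moreover have "is_tensor d 0"
    by (simp add: is_tensor_def)
  ultimately show ?case
    using "0.prems"(2) by (metis ein_zero_left ein_zero_right)
next
  case (Suc m)
  let ?R = "tpoly d T (\<lambda>l. c (Suc l)) m"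
  have shift: "tpoly d T c (Suc m) = tscale (c 0) (tid d) + ein d T ?R"
    by (rule tpoly_Suc_shift)
  show ?case
  proof (cases "c 0 = 0")
    case True
    then have "\<exists>l\<le>m. c (Suc l) \<noteq> 0"
      using Suc.prems(1) by (metis Suc_le_mono not0_implies_Suc)
    moreover have "ein d (tpow d T (Suc j)) ?R = ein d (tpow d T j) (tpoly d T c (Suc m))"
      using True by (simp add: shift ein_assoc tpow_commute[OF T, symmetric])
    then have "ein d (tpow d T (Suc j)) ?R = 0"
      using Suc.prems(2) by simp
    ultimately show ?thesis by (rule Suc.IH)
  next
    case False
    then show ?thesis
      using Suc.prems(2) is_tensor_tpoly[OF T] tpoly_commute[OF T]
      by (intro exI[of _ j] exI[of _ "c 0"] exI[of _ ?R]) (simp add: shift)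
  qed
qed

lemma tpow_annihilating_factor:
  assumes T: "is_tensor d T"
  shows "\<exists>k a R. a \<noteq> 0 \<and> is_tensor d R \<and> ein d T R = ein d R T \<and>
    ein d (tpow d T k) (tscale a (tid d) + ein d T R) = 0"
proof -
  obtain m c where c: "\<exists>l\<le>m. c l \<noteq> 0" and p: "tpoly d T c m = 0"
    using tpow_linearly_dependent[OF T] by blast
  have "ein d (tpow d T 0) (tpoly d T c m) = 0"
    using p by simp
  with c show ?thesis by (rule tpoly_vanishing_factor[OF T])
qed

lemma tker_tpow_subset:
  assumes T: "is_tensor d T" and index: "tker d (ein d T T) \<subseteq> tker d T"
  shows "tker d (tpow d T k) \<subseteq> tker d T"
proof (induction k)
  case 0
  show ?case by (auto simp: tker_def einv_tid)
next
  case (Suc k)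
  show ?case
  proof
    fix x assume "x \<in> tker d (tpow d T (Suc k))"
    then have "einv d T x \<in> tker d (tpow d T k)" and x: "is_tvec d x"
      by (auto simp: tker_def is_tvec_einv[OF T] einv_ein simp flip: tpow_commute[OF T])
    then have "x \<in> tker d (ein d T T)"
      using Suc.IH by (auto simp: tker_def einv_ein)
    then show "x \<in> tker d T" using index by blast
  qed
qed

text \<open>The index condition \<open>ker T\<^sup>2 \<subseteq> ker T\<close> turns \<open>T\<^sup>k (a + T R) = 0\<close> into
  \<open>T (a + T R) = 0\<close>, so \<open>-R/a\<close> is an inner inverse.\<close>
lemma commuting_inner_inverse_exists:
  assumes T: "is_tensor d T" and index: "tker d (ein d T T) \<subseteq> tker d T"
  shows "\<exists>G. is_tensor d G \<and> ein d T G = ein d G T \<and> ein d T (ein d T G) = T"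
proof -
  obtain k a R where a: "a \<noteq> 0" and R: "is_tensor d R" "ein d T R = ein d R T"
    and kill: "ein d (tpow d T k) (tscale a (tid d) + ein d T R) = 0"
    using tpow_annihilating_factor[OF T] by blast
  have "ein d T (tscale a (tid d) + ein d T R) = 0"
    using ein_eq_0_if_tker_subset[OF tker_tpow_subset[OF T index] _ kill]
    by (simp add: is_tensor_add is_tensor_tscale is_tensor_ein T R)
  then have "tscale a T + ein d T (ein d T R) = 0"
    by (simp only: ein_add_right ein_tscale_right ein_tid_right T)
  then have "ein d T (ein d T R) = - tscale a T"
    by (simp only: eq_neg_iff_add_eq_0 add.commute)
  moreover have "tscale (- 1 / a) (- tscale a T) = T"
    using a by (simp add: tscale_def fun_eq_iff)
  ultimately have "tscale (- 1 / a) (ein d T (ein d T R)) = T"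
    by simp
  then have "ein d T (ein d T (tscale (- 1 / a) R)) = T"
    by (simp only: ein_tscale_right)
  moreover have "ein d T (tscale (- 1 / a) R) = ein d (tscale (- 1 / a) R) T"
    by (simp only: ein_tscale_left ein_tscale_right R(2))
  ultimately show ?thesis
    using is_tensor_tscale[OF R(1)] by blast
qed

lemma group_inverse_exists:
  assumes T: "is_tensor d T" and index: "tker d (ein d T T) \<subseteq> tker d T"
  shows "\<exists>G. is_tensor d G \<and> ein d T G = ein d G T \<and>
    ein d T (ein d G T) = T \<and> ein d G (ein d T G) = G"
proof -
  obtain H where H: "is_tensor d H" "ein d H T = ein d T H" "ein d T (ein d T H) = T"
    using commuting_inner_inverse_exists[OF T index] by metis
  have THT: "ein d T (ein d H T) = T"
    using H(2,3) by simp
  have THT': "ein d T (ein d H (ein d T X)) = ein d T X" for X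
    using THT by (simp flip: ein_assoc)
  show ?thesis
    using H THT THT' T
    by (intro exI[of _ "ein d H (ein d T H)"]) (simp add: is_tensor_ein ein_assoc)
qed

lemma invertible_if_nonsingular:
  assumes T: "is_tensor d T" and nonsing: "nonsingular d T"
  shows "\<exists>T'. is_tensor d T' \<and> ein d T T' = tid d \<and> ein d T' T = tid d"
proof -
  have "tker d (ein d T T) \<subseteq> tker d T"
  proof
    fix x assume x: "x \<in> tker d (ein d T T)"
    then have "einv d T x \<in> tker d T"
      using is_tvec_einv[OF T] by (simp add: tker_def einv_ein)
    then show "x \<in> tker d T"
      using x nonsing by (auto simp: nonsingular_def tker_def)
  qed
  then obtain G where G: "is_tensor d G" "ein d T G = ein d G T" "ein d T (ein d T G) = T"
    using commuting_inner_inverse_exists[OF T] by blast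
  have "ein d T G = tid d"
    using nonsingular_cancel_left[OF nonsing _ is_tensor_ein[OF T G(1)] is_tensor_tid]
    by (simp add: G(3) ein_tid_right T)
  with G show ?thesis by metis
qed

section \<open>Inner products and the numerical range\<close>

lemma tinner_einv: "tinner d (einv d A X) Y = tinner d X (einv d (ctrans A) Y)"
  unfolding tinner_def einv_def ctrans_def
  by (auto simp: sum_distrib_left sum_distrib_right algebra_simps intro: sum.swap)

lemma tinner_cnj: "tinner d X Y = cnj (tinner d Y X)"
  by (simp add: tinner_def cnj_sum mult.commute)

lemma tinner_zero_left [simp]: "tinner d (\<lambda>_. 0) Y = 0"
  by (simp add: tinner_def)

lemma tinner_scale: "tinner d (\<lambda>i. a * X i) (\<lambda>i. b * Y i) = cnj b * a * tinner d X Y"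
  by (simp add: tinner_def sum_distrib_left mult_ac)

lemma Re_tinner_self_pos:
  assumes "is_tvec d X" "X \<noteq> (\<lambda>_. 0)"
  shows "Re (tinner d X X) > 0"
proof -
  obtain i where i: "X i \<noteq> 0"
    using assms(2) by auto
  then have "i \<in> idx d"
    using assms(1) by (auto simp: is_tvec_def)
  have "Re (cnj (X k) * X k) = (cmod (X k))\<^sup>2" for k
    by (simp add: cmod_power2) (simp add: power2_eq_square)
  then have "Re (tinner d X X) = (\<Sum>k\<in>idx d. (cmod (X k))\<^sup>2)"
    by (simp add: tinner_def Re_sum)
  also have "\<dots> > 0"
    using i by (intro sum_pos2[OF finite_idx \<open>i \<in> idx d\<close>]) auto
  finally show ?thesis .
qed

lemma zero_in_numrange_if_isotropic:
  assumes X: "is_tvec d X" "X \<noteq> (\<lambda>_. 0)" and isotropic: "tinner d (einv d T X) X = 0"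
  shows "0 \<in> numrange d T"
proof -
  define r where "r = Re (tinner d X X)"
  have r: "r > 0"
    unfolding r_def by (rule Re_tinner_self_pos[OF X])
  define c where "c = complex_of_real (1 / sqrt r)"
  have "cnj c * c = complex_of_real (1 / r)"
    using r by (simp add: c_def flip: of_real_mult)
  then have "Re (tinner d (\<lambda>i. c * X i) (\<lambda>i. c * X i)) = 1"
    using r by (simp add: tinner_scale r_def)
  then have "tnorm d (\<lambda>i. c * X i) = 1"
    by (simp add: tnorm_def)
  moreover have "is_tvec d (\<lambda>i. c * X i)"
    using X(1) by (simp add: is_tvec_def)
  moreover have "tinner d (einv d T (\<lambda>i. c * X i)) (\<lambda>i. c * X i) = 0"
    by (simp add: einv_scale tinner_scale isotropic)
  ultimately show ?thesis
    unfolding numrange_def by (metis (mono_tags, lifting) mem_Collect_eq)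
qed

lemma zero_in_numrange_if_singular:
  assumes "\<not> nonsingular d T"
  shows "0 \<in> numrange d T"
proof -
  obtain X where X: "is_tvec d X" "X \<noteq> (\<lambda>_. 0)" "einv d T X = (\<lambda>_. 0)"
    using assms by (auto simp: nonsingular_def tker_def)
  then have "tinner d (einv d T X) X = 0"
    by (simp only: tinner_zero_left)
  with X show ?thesis
    by (intro zero_in_numrange_if_isotropic)
qed

text \<open>With \<open>Y = P X\<close> one has \<open>\<langle>Q Y, Y\<rangle> = \<langle>X, P X\<rangle> = cnj \<langle>P X, X\<rangle>\<close>.\<close>
lemma zero_in_numrange_left_inverse:
  assumes P: "is_tensor d P" and QP: "ein d Q P = tid d" and "0 \<in> numrange d P"
  shows "0 \<in> numrange d Q"
proof -
  obtain X where X: "is_tvec d X" "tnorm d X = 1" "tinner d (einv d P X) X = 0"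
    using assms(3) unfolding numrange_def by auto
  define Y where "Y = einv d P X"
  have QY: "einv d Q Y = X"
    by (simp add: Y_def QP einv_tid X(1) flip: einv_ein)
  have "X \<noteq> (\<lambda>_. 0)"
    using X(2) by (auto simp: tnorm_def tinner_def)
  then have "Y \<noteq> (\<lambda>_. 0)"
    using QY by auto
  moreover have "tinner d (einv d Q Y) Y = cnj (tinner d Y X)"
    by (simp only: QY flip: tinner_cnj)
  then have "tinner d (einv d Q Y) Y = 0"
    using X(3) by (simp add: Y_def)
  ultimately show ?thesis
    using is_tvec_einv[OF P] by (intro zero_in_numrange_if_isotropic) (auto simp: Y_def)
qed

lemma hpd_tensor: "hpd d M \<Longrightarrow> is_tensor d M"
  by (simp add: hpd_def)

lemma hpd_hermitian: "hpd d M \<Longrightarrow> ctrans M = M"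
  by (simp add: hpd_def)

lemma hpd_isotropic_eq_0:
  "hpd d M \<Longrightarrow> is_tvec d X \<Longrightarrow> tinner d (einv d M X) X = 0 \<Longrightarrow> X = (\<lambda>_. 0)"
  unfolding hpd_def by force

lemma nonsingular_if_hpd: "hpd d M \<Longrightarrow> nonsingular d M"
  unfolding nonsingular_def tker_def by (auto intro: hpd_isotropic_eq_0 simp only: tinner_zero_left)

lemma hermitian_if_ctrans_ein_fixes:
  assumes S: "ctrans S = S" and PSP: "ein d (ctrans P) (ein d S P) = ein d S P"
  shows "ctrans (ein d S P) = ein d S P"
proof -
  have "ctrans (ein d S P) = ctrans (ein d (ctrans P) (ein d S P))"
    by (simp only: PSP)
  also have "\<dots> = ein d (ctrans P) (ein d S P)"
    by (simp add: ctrans_ein S ein_assoc)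
  finally show ?thesis
    by (simp only: PSP)
qed

lemma ein_ctrans_hermitian:
  "ctrans S = S \<Longrightarrow> ctrans (ein d S P) = ein d S P \<Longrightarrow> ein d (ctrans P) S = ein d S P"
  by (metis ctrans_ein)

lemma ein_weighted_ctrans_swap:
  assumes S: "ctrans S = S"
    and P: "ctrans (ein d S P) = ein d S P" and Q: "ctrans (ein d S Q) = ein d S Q"
  shows "ein d S (ein d P Q) = ein d (ctrans (ein d Q P)) S"
proof -
  have SP: "ein d (ctrans P) S = ein d S P" and SQ: "ein d (ctrans Q) S = ein d S Q"
    using ein_ctrans_hermitian[OF S] P Q by blast+
  have "ein d S (ein d P Q) = ein d (ctrans P) (ein d S Q)"
    by (simp add: SP flip: ein_assoc)
  also have "\<dots> = ein d (ctrans (ein d Q P)) S"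
    by (simp add: ctrans_ein ein_assoc SQ)
  finally show ?thesis .
qed

section \<open>Existence and uniqueness of the weighted Moore-Penrose inverse\<close>

definition is_wmp :: "nat list \<Rightarrow> tensor \<Rightarrow> tensor \<Rightarrow> tensor \<Rightarrow> tensor \<Rightarrow> bool" where
  "is_wmp d A M N X \<longleftrightarrow> is_tensor d X \<and>
      ein d (ein d A X) A = A \<and>
      ein d (ein d X A) X = X \<and>
      ctrans (ein d M (ein d A X)) = ein d M (ein d A X) \<and>
      ctrans (ein d N (ein d X A)) = ein d N (ein d X A)"

lemma is_wmp_unique:
  assumes A: "is_tensor d A" and M: "hpd d M" and N: "hpd d N"
    and "is_wmp d A M N X" and "is_wmp d A M N Y"
  shows "X = Y"
proof -
  have X: "is_tensor d X" "ein d (ein d X A) X = X"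
      "ctrans (ein d M (ein d A X)) = ein d M (ein d A X)"
      "ctrans (ein d N (ein d X A)) = ein d N (ein d X A)"
    and Y: "is_tensor d Y" "ein d (ein d Y A) Y = Y"
      "ctrans (ein d M (ein d A Y)) = ein d M (ein d A Y)"
      "ctrans (ein d N (ein d Y A)) = ein d N (ein d Y A)"
    using assms(4,5) by (simp_all add: is_wmp_def)
  have AXA: "ein d A (ein d X A) = A" "ein d A (ein d X (ein d A Z)) = ein d A Z" for Z
    using assms(4) by (simp_all add: is_wmp_def flip: ein_assoc)
  have AYA: "ein d A (ein d Y A) = A" "ein d A (ein d Y (ein d A Z)) = ein d A Z" for Z
    using assms(5) by (simp_all add: is_wmp_def flip: ein_assoc)
  note M' = hpd_hermitian[OF M] and N' = hpd_hermitian[OF N]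
  have "ein d M (ein d A Y) = ein d M (ein d (ein d A X) (ein d A Y))"
    by (simp only: ein_assoc AXA(2))
  also have "\<dots> = ein d (ctrans (ein d (ein d A Y) (ein d A X))) M"
    by (rule ein_weighted_ctrans_swap[OF M' X(3) Y(3)])
  also have "\<dots> = ein d M (ein d A X)"
    by (simp only: ein_assoc AYA(2) ein_ctrans_hermitian[OF M' X(3)])
  finally have AYX: "ein d A Y = ein d A X"
    by (rule nonsingular_cancel_left[OF nonsingular_if_hpd[OF M]])
      (simp_all add: is_tensor_ein A X(1) Y(1))
  have "ein d N (ein d X A) = ein d N (ein d (ein d X A) (ein d Y A))"
    by (simp only: ein_assoc AYA(1))
  also have "\<dots> = ein d (ctrans (ein d (ein d Y A) (ein d X A))) N"
    by (rule ein_weighted_ctrans_swap[OF N' X(4) Y(4)])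
  also have "\<dots> = ein d N (ein d Y A)"
    by (simp only: ein_assoc AXA(1) ein_ctrans_hermitian[OF N' Y(4)])
  finally have XAY: "ein d X A = ein d Y A"
    by (rule nonsingular_cancel_left[OF nonsingular_if_hpd[OF N]])
      (simp_all add: is_tensor_ein A X(1) Y(1))
  have "X = ein d (ein d X A) X"
    using X(2) by simp
  also have "\<dots> = ein d (ein d Y A) Y"
    by (simp only: XAY ein_assoc AYX[symmetric])
  also have "\<dots> = Y"
    using Y(2) .
  finally show ?thesis .
qed


locale wmp_construction =
  fixes d :: "nat list" and A M N N' :: tensor
  assumes A: "is_tensor d A" and M: "hpd d M" and N: "hpd d N"
    and N': "is_tensor d N'" "ein d N N' = tid d" "ein d N' N = tid d"
begin

definition gram :: tensor where
  "gram = ein d (ctrans A) (ein d M A)"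

definition W :: tensor where
  "W = ein d N' (ein d (ctrans A) M)"

definition T :: tensor where
  "T = ein d W A"

lemma is_tensor_W: "is_tensor d W"
  unfolding W_def by (intro is_tensor_ein is_tensor_ctrans N'(1) A hpd_tensor[OF M])

lemma is_tensor_T: "is_tensor d T"
  unfolding T_def by (intro is_tensor_ein is_tensor_W A)

lemma gram_hermitian: "ctrans gram = gram"
  by (simp add: gram_def ctrans_ein hpd_hermitian[OF M] ein_assoc)

lemma ein_N_W: "ein d N W = ein d (ctrans A) M"
  by (simp add: W_def N'(2) ein_tid_left is_tensor_ein is_tensor_ctrans A hpd_tensor[OF M]
      flip: ein_assoc)

lemma ein_N_T: "ein d N T = gram"
  by (simp add: T_def gram_def ein_N_W ein_assoc flip: ein_assoc[of d N W])

lemma tker_T_subset: "tker d T \<subseteq> tker d A"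
proof
  fix X assume "X \<in> tker d T"
  then have X: "is_tvec d X" and TX: "einv d T X = (\<lambda>_. 0)"
    by (simp_all add: tker_def)
  have "einv d gram X = einv d N (einv d T X)"
    by (simp add: einv_ein flip: ein_N_T)
  then have "einv d gram X = (\<lambda>_. 0)"
    by (simp add: TX)
  moreover have "tinner d (einv d M (einv d A X)) (einv d A X) = tinner d (einv d gram X) X"
    by (simp add: gram_def einv_ein tinner_einv[of d "ctrans A"])
  ultimately have "tinner d (einv d M (einv d A X)) (einv d A X) = 0"
    by simp
  then show "X \<in> tker d A"
    using X hpd_isotropic_eq_0[OF M is_tvec_einv[OF A]] by (simp add: tker_def)
qed

lemma tker_T_index: "tker d (ein d T T) \<subseteq> tker d T"
proof
  fix X assume "X \<in> tker d (ein d T T)"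
  then have X: "is_tvec d X" and TTX: "einv d T (einv d T X) = (\<lambda>_. 0)"
    by (simp_all add: tker_def einv_ein)
  define Y where "Y = einv d T X"
  have "einv d gram Y = einv d N (einv d T (einv d T X))"
    by (simp add: Y_def einv_ein flip: ein_N_T)
  then have gram_Y: "einv d gram Y = (\<lambda>_. 0)"
    by (simp add: TTX)
  have "tinner d (einv d N Y) Y = tinner d (einv d gram X) Y"
    by (simp add: Y_def einv_ein flip: ein_N_T)
  also have "\<dots> = tinner d X (einv d gram Y)"
    by (simp only: tinner_einv gram_hermitian)
  also have "\<dots> = 0"
    by (simp add: gram_Y tinner_def)
  finally have "Y = (\<lambda>_. 0)"
    using hpd_isotropic_eq_0[OF N is_tvec_einv[OF is_tensor_T]] by (simp add: Y_def)
  then show "X \<in> tker d T"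
    using X by (simp add: tker_def Y_def)
qed

context
  fixes G :: tensor
  assumes G: "is_tensor d G" "ein d T G = ein d G T" "ein d T (ein d G T) = T"
    "ein d G (ein d T G) = G"
begin

lemma T_ein_TG: "ein d T (ein d T G) = T"
  using G(2,3) by simp

lemma A_ein_TG: "ein d A (ein d T G) = A"
proof -
  have "ein d T (tid d - ein d T G) = 0"
    by (simp add: ein_diff_right ein_tid_right is_tensor_T T_ein_TG)
  then have "ein d A (tid d - ein d T G) = 0"
    using ein_eq_0_if_tker_subset[OF tker_T_subset]
      is_tensor_diff[OF is_tensor_tid is_tensor_ein[OF is_tensor_T G(1)]] by blast
  then show ?thesis
    by (simp add: ein_diff_right ein_tid_right A)
qed

lemma N_ein_TG: "ein d N (ein d T G) = ein d gram G"
  by (simp add: ein_N_T flip: ein_assoc)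

lemma N_ein_TG_hermitian: "ctrans (ein d N (ein d T G)) = ein d N (ein d T G)"
proof (rule hermitian_if_ctrans_ein_fixes[OF hpd_hermitian[OF N]])
  have "ein d gram (ein d T G) = gram"
    by (simp add: ein_assoc T_ein_TG flip: ein_N_T)
  then have gram_fixed: "ein d (ctrans (ein d T G)) gram = gram"
    by (metis ctrans_ein gram_hermitian)
  have "ein d (ctrans (ein d T G)) (ein d N (ein d T G)) = ein d (ein d (ctrans (ein d T G)) gram) G"
    by (simp only: N_ein_TG ein_assoc)
  also have "\<dots> = ein d N (ein d T G)"
    by (simp only: gram_fixed N_ein_TG)
  finally show "ein d (ctrans (ein d T G)) (ein d N (ein d T G)) = ein d N (ein d T G)" .
qed

lemma ctrans_A_M_ein_candidate: "ein d (ctrans A) (ein d M (ein d A (ein d G W))) = ein d (ctrans A) M"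
proof -
  have "ein d (ctrans A) (ein d M (ein d A (ein d G W))) = ein d (ein d N (ein d T G)) W"
    by (simp add: N_ein_TG gram_def ein_assoc)
  also have "\<dots> = ein d (ctrans (ein d T G)) (ein d N W)"
    by (metis N_ein_TG_hermitian ctrans_ein hpd_hermitian[OF N] ein_assoc)
  also have "\<dots> = ein d (ctrans (ein d A (ein d T G))) M"
    by (simp add: ein_N_W ctrans_ein flip: ein_assoc)
  also have "\<dots> = ein d (ctrans A) M"
    by (simp only: A_ein_TG)
  finally show ?thesis .
qed

lemma is_wmp_candidate: "is_wmp d A M N (ein d G W)"
proof -
  let ?F = "ein d A (ein d G W)"
  have XA: "ein d (ein d G W) A = ein d T G"
    by (simp add: ein_assoc G(2) flip: T_def)
  have "ein d (ein d T G) (ein d G W) = ein d G (ein d T (ein d G W))"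
    by (simp only: G(2) ein_assoc)
  also have "\<dots> = ein d (ein d G (ein d T G)) W"
    by (simp only: ein_assoc)
  also have "\<dots> = ein d G W"
    by (simp only: G(4))
  finally have XAX: "ein d (ein d T G) (ein d G W) = ein d G W" .
  have AXA: "ein d ?F A = A"
    by (simp only: ein_assoc[of d A] XA A_ein_TG)
  have F_M_A: "ein d (ctrans ?F) (ein d M A) = ein d M A"
    using arg_cong[OF ctrans_A_M_ein_candidate, of ctrans]
    by (simp add: ctrans_ein hpd_hermitian[OF M] ein_assoc)
  have "ein d (ctrans ?F) (ein d M ?F) = ein d (ein d (ctrans ?F) (ein d M A)) (ein d G W)"
    by (simp only: ein_assoc)
  also have "\<dots> = ein d M ?F"
    by (simp only: F_M_A ein_assoc)
  finally have "ctrans (ein d M ?F) = ein d M ?F"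
    by (rule hermitian_if_ctrans_ein_fixes[OF hpd_hermitian[OF M]])
  then show ?thesis
    using G(1) N_ein_TG_hermitian XAX AXA
    by (simp add: is_wmp_def is_tensor_ein is_tensor_W XA)
qed

end

end

lemma wmp_exists:
  assumes A: "is_tensor d A" and M: "hpd d M" and N: "hpd d N"
  shows "\<exists>X. is_wmp d A M N X"
proof -
  obtain N' where "is_tensor d N'" "ein d N N' = tid d" "ein d N' N = tid d"
    using invertible_if_nonsingular[OF hpd_tensor[OF N] nonsingular_if_hpd[OF N]] by blast
  then interpret wmp_construction d A M N N'
    using assms by unfold_locales
  obtain G where "is_tensor d G" "ein d T G = ein d G T" "ein d T (ein d G T) = T"
    "ein d G (ein d T G) = G"
    using group_inverse_exists[OF is_tensor_T tker_T_index] by blast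
  then show ?thesis
    using is_wmp_candidate by blast
qed

lemma is_wmp_wmp:
  assumes "is_tensor d A" "hpd d M" "hpd d N"
  shows "is_wmp d A M N (wmp d A M N)"
proof -
  have "\<exists>!X. is_wmp d A M N X"
    using wmp_exists[OF assms] is_wmp_unique[OF assms] by blast
  then have "is_wmp d A M N (THE X. is_wmp d A M N X)"
    by (rule theI')
  then show ?thesis
    by (simp add: wmp_def is_wmp_def)
qed

section \<open>Singularity of a tensor and of its weighted Moore-Penrose inverse\<close>

lemma inverse_if_inner_inverse_of_nonsingular:
  assumes A: "is_tensor d A" and X: "is_tensor d X" and AXA: "ein d (ein d A X) A = A"
    and nonsing: "nonsingular d A"
  shows "ein d A X = tid d \<and> ein d X A = tid d"
proof -
  obtain A' where A': "is_tensor d A'" "ein d A A' = tid d" "ein d A' A = tid d"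
    using invertible_if_nonsingular[OF A nonsing] by blast
  have "ein d X A = ein d (ein d A' A) (ein d X A)"
    by (simp add: A'(3) ein_tid_left is_tensor_ein A X)
  also have "\<dots> = ein d A' (ein d (ein d A X) A)"
    by (simp only: ein_assoc)
  also have "\<dots> = tid d"
    by (simp only: AXA A'(3))
  finally have "ein d X A = tid d" .
  have "ein d A X = ein d (ein d A X) (ein d A A')"
    by (simp add: A'(2) ein_tid_right is_tensor_ein A X)
  also have "\<dots> = ein d (ein d (ein d A X) A) A'"
    by (simp only: ein_assoc)
  also have "\<dots> = tid d"
    by (simp only: AXA A'(2))
  finally show ?thesis
    using \<open>ein d X A = tid d\<close> by blast
qed

lemma nonsingular_iff_reflexive_inverse:
  assumes "is_tensor d A" "is_tensor d X"
    and "ein d (ein d A X) A = A" "ein d (ein d X A) X = X"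
  shows "nonsingular d A \<longleftrightarrow> nonsingular d X"
  using inverse_if_inner_inverse_of_nonsingular[OF assms(1-3)]
    inverse_if_inner_inverse_of_nonsingular[OF assms(2,1,4)] nonsingular_if_left_inverse
  by blast

theorem theorem6p1:
  fixes dims :: "nat list" and A M N :: tensor
  assumes "is_tensor dims A" and "hpd dims M" and "hpd dims N"
  shows "(0 \<in> tspectrum dims A \<longleftrightarrow> 0 \<in> tspectrum dims (wmp dims A M N)) \<and>
         (0 \<in> numrange dims A \<longleftrightarrow> 0 \<in> numrange dims (wmp dims A M N))"
proof -
  define X where "X = wmp dims A M N"
  have "is_wmp dims A M N X"
    unfolding X_def by (rule is_wmp_wmp[OF assms])
  then have X: "is_tensor dims X" and AXA: "ein dims (ein dims A X) A = A"
    and XAX: "ein dims (ein dims X A) X = X"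
    by (simp_all add: is_wmp_def)
  have sing: "nonsingular dims A \<longleftrightarrow> nonsingular dims X"
    by (rule nonsingular_iff_reflexive_inverse[OF assms(1) X AXA XAX])
  have "0 \<in> numrange dims A \<longleftrightarrow> 0 \<in> numrange dims X"
  proof (cases "nonsingular dims A")
    case True
    then have "ein dims A X = tid dims" "ein dims X A = tid dims"
      using inverse_if_inner_inverse_of_nonsingular[OF assms(1) X AXA] by blast+
    then show ?thesis
      using zero_in_numrange_left_inverse assms(1) X by blast
  next
    case False
    then show ?thesis
      using sing zero_in_numrange_if_singular by blast
  qed
  with sing show ?thesis
    unfolding X_def zero_in_tspectrum_iff by blast
qed

end
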